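(* Assume the standing assumptions (A1)–(A4), $\rho>0$, and $D_0>0$, $L_0>0$. Let $\epsilon_1,\epsilon_2\ge 0$ satisfy $\bigl[\frac{2\epsilon_1}{\mu_0}\bigr]^{1/2}\le Z_1(\epsilon_2)$. If $p\in\mathbb R^{n_p}$ satisfies $|f(p)-f(p^* )|\le \epsilon_1$, then $|f_0(p)-f_0(p^* )|\le \epsilon_2$.
   Context: Let $n_p,n_c\ge 1$, let $f_0:\mathbb R^{n_p}\to\mathbb R$ and $c_i:\mathbb R^{n_p}\to\mathbb R$ ($i=1,\dots,n_c$) be continuously differentiable, and let $\{1,\dots,n_c\}=I_s\cup I_h$ be a partition into disjoint sets of soft and hard constraint indices. The original problem is $\min_{p\in\mathbb R^{n_p}} f_0(p)$ subject to $c_i(p)\le 0$ for all $i$; $f^{opt}$ denotes its optimal value and $p^{opt}$ an optimal solution (assumed to exist). For a fixed $\varepsilon_\psi>0$ let $\psi(p):=\sum_{i\in I_s}[\max\{0,c_i(p)\}]^2+\sum_{i\in I_h}[\max\{0,c_i(p)+\varepsilon_\psi\}]^2$, and for a penalty parameter $\rho>0$ let $f(p):=f_0(p)+\rho\,\psi(p)$. A differentiable function $\ell$ belongs to $\mathcal F^1_L$ if $\ell(p_2)\le \ell(p_1)+\langle \ell'(p_1),p_2-p_1\rangle+\frac L2\|p_2-p_1\|^2$ for all $p_1,p_2$, and is $\mu$-strongly convex if $\ell(p_2)\ge \ell(p_1)+\langle \ell'(p_1),p_2-p_1\rangle+\frac \mu2\|p_2-p_1\|^2$ for all $p_1,p_2$.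 Standing assumptions: (A1) $f_0(p)\ge 0$ for all $p$; (A2) $f_0\in\mathcal F^1_{L_0}$ and $\psi\in\mathcal F^1_{L_\psi}$ for some reals $L_0,L_\psi\ge 0$; (A3) $f_0$ is $\mu_0$-strongly convex for some $\mu_0>0$, and $\psi$ is convex; (A4) the set $\mathcal A:=\{p:\psi(p)=0\}$ is nonempty and there is $\beta>0$ with $\psi(p)\ge \beta\,[d(p,\mathcal A)]^2$ for all $p$, where $d(p,\mathcal A):=\min_{z\in\mathcal A}\|z-p\|$. Notation: $\|\cdot\|$ is the Euclidean norm; $p^*$ is the unique minimizer of $f$ over $\mathbb R^{n_p}$; $p_u$ is the unique unconstrained minimizer of $f_0$; $p_a$ is a fixed point with $\psi(p_a)=0$; $D_0:=\sup\{\|f_0'(p)\|:\ f_0(p)\le f_0(p_a)\}$; $d(p):=\|p-p^*\|$. For $\epsilon\ge 0$, $Z_1(\epsilon):=\frac{D_0}{L_0}\Bigl[\bigl(1+\frac{2L_0}{D_0^2}\epsilon\bigr)^{1/2}-1\Bigr]$. *)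

theory Defs
  imports "HOL-Analysis.Analysis"
begin

definition C1_with_grad :: "('a::euclidean_space \<Rightarrow> real) \<Rightarrow> ('a \<Rightarrow> 'a) \<Rightarrow> bool" where
  "C1_with_grad f g \<longleftrightarrow> (\<forall>x. GDERIV f x :> g x) \<and> continuous_on UNIV g"

definition cont_diff :: "('a::euclidean_space \<Rightarrow> real) \<Rightarrow> bool" where
  "cont_diff f \<longleftrightarrow> (\<exists>g. C1_with_grad f g)"

definition in_F1L :: "real \<Rightarrow> ('a::euclidean_space \<Rightarrow> real) \<Rightarrow> bool" where
  "in_F1L L f \<longleftrightarrow> (\<exists>g. (\<forall>x. GDERIV f x :> g x) \<and>
     (\<forall>p1 p2. f p2 \<le> f p1 + inner (g p1) (p2 - p1) + L / 2 * (norm (p2 - p1))\<^sup>2))"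

definition strongly_convex_grad :: "real \<Rightarrow> ('a::euclidean_space \<Rightarrow> real) \<Rightarrow> bool" where
  "strongly_convex_grad mu f \<longleftrightarrow> (\<exists>g. (\<forall>x. GDERIV f x :> g x) \<and>
     (\<forall>p1 p2. f p2 \<ge> f p1 + inner (g p1) (p2 - p1) + mu / 2 * (norm (p2 - p1))\<^sup>2))"

definition psi_pen :: "(nat \<Rightarrow> 'a \<Rightarrow> real) \<Rightarrow> nat set \<Rightarrow> nat set \<Rightarrow> real \<Rightarrow> 'a \<Rightarrow> real" where
  "psi_pen c Is Ih eps_psi p =
     (\<Sum>i\<in>Is. (max 0 (c i p))\<^sup>2) + (\<Sum>i\<in>Ih. (max 0 (c i p + eps_psi))\<^sup>2)"

definition Z1 :: "real \<Rightarrow> real \<Rightarrow> real \<Rightarrow> real" where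
  "Z1 D0 L0 eps = D0 / L0 * (sqrt (1 + 2 * L0 / D0\<^sup>2 * eps) - 1)"

end

theory Submission imports Defs begin

text \<open>Strong convexity of \<open>f\<^sub>0\<close> and convexity of the penalty give quadratic growth of
  \<open>f = f\<^sub>0 + \<rho> \<psi>\<close> around its minimiser \<open>p*\<close>, so \<open>|f(p) - f(p*)| \<le> \<epsilon>\<^sub>1\<close> forces
  \<open>d = \<parallel>p - p*\<parallel> \<le> sqrt (2 \<epsilon>\<^sub>1 / \<mu>\<^sub>0) \<le> Z\<^sub>1(\<epsilon>\<^sub>2)\<close>. The two-sided gradient inequalities at
  \<open>p*\<close> give \<open>|f\<^sub>0(p) - f\<^sub>0(p*)| \<le> D\<^sub>0 d + L\<^sub>0 d\<^sup>2 / 2\<close>, provided \<open>\<parallel>f\<^sub>0'(p*)\<parallel> \<le> D\<^sub>0\<close>; this holds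
  because \<open>f\<^sub>0(p*) \<le> f(p*) \<le> f(p\<^sub>a) = f\<^sub>0(p\<^sub>a)\<close>. Finally \<open>Z\<^sub>1(\<epsilon>)\<close> is the positive root of
  \<open>D\<^sub>0 z + L\<^sub>0 z\<^sup>2 / 2 = \<epsilon>\<close>.\<close>

lemma GDERIV_unique:
  fixes a b :: "'a::real_inner"
  assumes "GDERIV f x :> a" "GDERIV f x :> b"
  shows "a = b"
proof -
  have "(\<lambda>h. inner h a) = (\<lambda>h. inner h b)"
    using has_derivative_unique assms unfolding gderiv_def by blast
  then have "inner (a - b) a = inner (a - b) b" by metis
  then have "inner (a - b) (a - b) = 0" by (simp add: inner_diff_right)
  then show ?thesis by simp
qed

lemma in_F1L_upper_bound:
  assumes "\<And>x. GDERIV f x :> g x" "in_F1L L f"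
  shows "f p2 \<le> f p1 + inner (g p1) (p2 - p1) + L / 2 * (norm (p2 - p1))\<^sup>2"
  using assms GDERIV_unique unfolding in_F1L_def by metis

lemma strongly_convex_grad_lower_bound:
  assumes "\<And>x. GDERIV f x :> g x" "strongly_convex_grad mu f"
  shows "f p2 \<ge> f p1 + inner (g p1) (p2 - p1) + mu / 2 * (norm (p2 - p1))\<^sup>2"
  using assms GDERIV_unique unfolding strongly_convex_grad_def by metis

lemma strongly_convex_combination:
  fixes f :: "'a::real_inner \<Rightarrow> real" and g :: "'a \<Rightarrow> 'a"
  assumes sc: "\<And>p1 p2. f p2 \<ge> f p1 + inner (g p1) (p2 - p1) + mu / 2 * (norm (p2 - p1))\<^sup>2"
    and t: "0 \<le> t" "t \<le> 1"
  shows "f ((1 - t) *\<^sub>R x + t *\<^sub>R y)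
           \<le> (1 - t) * f x + t * f y - mu / 2 * t * (1 - t) * (norm (y - x))\<^sup>2"
proof -
  define q where "q = (1 - t) *\<^sub>R x + t *\<^sub>R y"
  have "x - q = (- t) *\<^sub>R (y - x)" "y - q = (1 - t) *\<^sub>R (y - x)"
    unfolding q_def by (simp_all add: algebra_simps)
  then have x: "f x \<ge> f q - t * inner (g q) (y - x) + mu / 2 * (t\<^sup>2 * (norm (y - x))\<^sup>2)"
    and y: "f y \<ge> f q + (1 - t) * inner (g q) (y - x) + mu / 2 * ((1 - t)\<^sup>2 * (norm (y - x))\<^sup>2)"
    using sc[where ?p1.0=q and ?p2.0=x] sc[where ?p1.0=q and ?p2.0=y] t
    by (simp_all add: power_mult_distrib)
  have "f q + mu / 2 * t * (1 - t) * (norm (y - x))\<^sup>2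
      = (1 - t) * (f q - t * inner (g q) (y - x) + mu / 2 * (t\<^sup>2 * (norm (y - x))\<^sup>2))
        + t * (f q + (1 - t) * inner (g q) (y - x) + mu / 2 * ((1 - t)\<^sup>2 * (norm (y - x))\<^sup>2))"
    by (simp add: field_simps power2_eq_square)
  also have "\<dots> \<le> (1 - t) * f x + t * f y"
    using x y t by (intro add_mono mult_left_mono) auto
  finally show ?thesis unfolding q_def by linarith
qed

lemma quadratic_growth_at_minimizer:
  fixes f h :: "'a::real_inner \<Rightarrow> real" and g :: "'a \<Rightarrow> 'a"
  assumes sc: "\<And>p1 p2. f p2 \<ge> f p1 + inner (g p1) (p2 - p1) + mu / 2 * (norm (p2 - p1))\<^sup>2"
    and h: "convex_on UNIV h"
    and min: "\<And>y. f x0 + h x0 \<le> f y + h y"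
  shows "mu / 2 * (norm (x - x0))\<^sup>2 \<le> (f x + h x) - (f x0 + h x0)"
proof (rule field_le_mult_one_interval)
  \<comment> \<open>Compare with the point \<open>q\<close> at parameter \<open>t = 1 - s\<close> on the segment, then let \<open>s \<rightarrow> 1\<close>.\<close>
  fix s :: real assume s: "0 < s" "s < 1"
  define t where "t = 1 - s"
  have t: "0 < t" "t < 1" using s unfolding t_def by auto
  define q where "q = (1 - t) *\<^sub>R x0 + t *\<^sub>R x"
  have "f x0 + h x0 \<le> f q + h q" by (rule min)
  also have "\<dots> \<le> (1 - t) * (f x0 + h x0) + t * (f x + h x)
                    - mu / 2 * t * (1 - t) * (norm (x - x0))\<^sup>2"
    using strongly_convex_combination[OF sc, of t x0 x] convex_onD[OF h, of t x0 x] t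
    unfolding q_def by (simp add: algebra_simps)
  finally have "t * (s * (mu / 2 * (norm (x - x0))\<^sup>2)) \<le> t * ((f x + h x) - (f x0 + h x0))"
    unfolding t_def by (simp add: algebra_simps)
  then show "s * (mu / 2 * (norm (x - x0))\<^sup>2) \<le> (f x + h x) - (f x0 + h x0)"
    using t by simp
qed

text \<open>One gradient step from \<open>x\<close> decreases \<open>f\<close> by \<open>\<parallel>g x\<parallel>\<^sup>2/(2L)\<close>, and \<open>f\<close> cannot drop below 0.\<close>

lemma norm_grad_sq_le_of_smooth_nonneg:
  fixes f :: "'a::real_inner \<Rightarrow> real" and g :: "'a \<Rightarrow> 'a"
  assumes sm: "\<And>p1 p2. f p2 \<le> f p1 + inner (g p1) (p2 - p1) + L / 2 * (norm (p2 - p1))\<^sup>2"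
    and L: "L > 0" and nonneg: "\<And>y. f y \<ge> 0"
  shows "(norm (g x))\<^sup>2 \<le> 2 * L * f x"
proof -
  define y where "y = x - (1 / L) *\<^sub>R g x"
  have "f y \<le> f x + inner (g x) (- (1 / L) *\<^sub>R g x) + L / 2 * (norm (- (1 / L) *\<^sub>R g x))\<^sup>2"
    using sm[where ?p1.0=x and ?p2.0=y] unfolding y_def by simp
  also have "\<dots> = f x - (norm (g x))\<^sup>2 / (2 * L)"
    using L by (simp add: dot_square_norm power_mult_distrib field_simps power2_eq_square)
  finally show ?thesis
    using mult_nonneg_nonneg[OF less_imp_le[OF L] nonneg[of y]] L by (simp add: field_simps)
qed

lemma norm_grad_le_Sup_sublevel:
  fixes f :: "'a::real_inner \<Rightarrow> real" and g :: "'a \<Rightarrow> 'a"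
  assumes sm: "\<And>p1 p2. f p2 \<le> f p1 + inner (g p1) (p2 - p1) + L / 2 * (norm (p2 - p1))\<^sup>2"
    and L: "L > 0" and nonneg: "\<And>y. f y \<ge> 0" and x: "f x \<le> f a"
  shows "norm (g x) \<le> Sup {norm (g y) | y. f y \<le> f a}"
proof (rule cSup_upper)
  show "norm (g x) \<in> {norm (g y) | y. f y \<le> f a}" using x by blast
  show "bdd_above {norm (g y) | y. f y \<le> f a}"
  proof (rule bdd_aboveI)
    fix r assume "r \<in> {norm (g y) | y. f y \<le> f a}"
    then obtain y where y: "r = norm (g y)" "f y \<le> f a" by blast
    have "(norm (g y))\<^sup>2 \<le> 2 * L * f y"
      by (rule norm_grad_sq_le_of_smooth_nonneg[OF sm L nonneg])
    also have "\<dots> \<le> 2 * L * f a" using y(2) L by simp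
    finally have "(norm (g y))\<^sup>2 \<le> 2 * L * f a" .
    then show "r \<le> sqrt (2 * L * f a)" using y(1) by (simp add: real_le_rsqrt)
  qed
qed

lemma abs_diff_le_of_gradient_bounds:
  fixes f :: "'a::real_inner \<Rightarrow> real" and g :: "'a \<Rightarrow> 'a"
  assumes upper: "\<And>p1 p2. f p2 \<le> f p1 + inner (g p1) (p2 - p1) + L / 2 * (norm (p2 - p1))\<^sup>2"
    and lower: "\<And>p1 p2. f p2 \<ge> f p1 + inner (g p1) (p2 - p1) + mu / 2 * (norm (p2 - p1))\<^sup>2"
    and L: "L \<ge> 0" and mu: "mu \<ge> 0" and D: "norm (g x0) \<le> D"
  shows "\<bar>f x - f x0\<bar> \<le> D * norm (x - x0) + L / 2 * (norm (x - x0))\<^sup>2"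
proof -
  have "\<bar>inner (g x0) (x - x0)\<bar> \<le> D * norm (x - x0)"
    using Cauchy_Schwarz_ineq2[of "g x0" "x - x0"] D
    by (meson mult_right_mono norm_ge_zero order_trans)
  moreover have "mu / 2 * (norm (x - x0))\<^sup>2 \<ge> 0" "L / 2 * (norm (x - x0))\<^sup>2 \<ge> 0"
    using L mu by simp_all
  ultimately show ?thesis
    using upper[where ?p1.0=x0 and ?p2.0=x] lower[where ?p1.0=x0 and ?p2.0=x] by linarith
qed

lemma Z1_solves_quadratic:
  assumes D: "D > 0" and L: "L > 0" and eps: "eps \<ge> 0"
  shows "D * Z1 D L eps + L / 2 * (Z1 D L eps)\<^sup>2 = eps"
proof -
  define s where "s = sqrt (1 + 2 * L / D\<^sup>2 * eps)"
  have s2: "s\<^sup>2 = 1 + 2 * L / D\<^sup>2 * eps" unfolding s_def using L eps by simp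
  have "D * Z1 D L eps + L / 2 * (Z1 D L eps)\<^sup>2 = D\<^sup>2 / (2 * L) * (s\<^sup>2 - 1)"
    unfolding Z1_def s_def[symmetric] using L D by (simp add: field_simps power2_eq_square)
  also have "\<dots> = eps" unfolding s2 using L D by (simp add: field_simps)
  finally show ?thesis .
qed

lemma quadratic_le_of_le_Z1:
  assumes D: "D > 0" and L: "L > 0" and eps: "eps \<ge> 0"
    and d: "0 \<le> d" "d \<le> Z1 D L eps"
  shows "D * d + L / 2 * d\<^sup>2 \<le> eps"
proof -
  have "D * d + L / 2 * d\<^sup>2 \<le> D * Z1 D L eps + L / 2 * (Z1 D L eps)\<^sup>2"
    using d D L by (intro add_mono mult_left_mono power_mono) auto
  then show ?thesis using Z1_solves_quadratic[OF D L eps] by simp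
qed

lemma psi_pen_nonneg: "psi_pen c Is Ih eps_psi p \<ge> 0"
  unfolding psi_pen_def by (intro add_nonneg_nonneg sum_nonneg) auto

theorem corollary2:
  fixes f0 :: "real^'n \<Rightarrow> real" and g0 :: "real^'n \<Rightarrow> real^'n"
    and c :: "nat \<Rightarrow> real^'n \<Rightarrow> real"
    and n_c :: nat and Is Ih :: "nat set"
    and eps_psi rho L0 L_psi mu0 beta :: real
    and pstar pa p :: "real^'n" and eps1 eps2 :: real
  assumes nc: "n_c \<ge> 1"
    and part: "Is \<union> Ih = {1..n_c}" "Is \<inter> Ih = {}"
    and f0_C1: "C1_with_grad f0 g0"
    and c_C1: "\<forall>i\<in>{1..n_c}. cont_diff (c i)"
    and eps_psi: "eps_psi > 0"
    and rho: "rho > 0"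
    and A1: "\<forall>x. f0 x \<ge> 0"
    and A2: "L0 \<ge> 0" "L_psi \<ge> 0" "in_F1L L0 f0" "in_F1L L_psi (psi_pen c Is Ih eps_psi)"
    and A3: "mu0 > 0" "strongly_convex_grad mu0 f0" "convex_on UNIV (psi_pen c Is Ih eps_psi)"
    and A4: "{x. psi_pen c Is Ih eps_psi x = 0} \<noteq> {}" "beta > 0"
            "\<forall>x. psi_pen c Is Ih eps_psi x \<ge>
                   beta * (infdist x {z. psi_pen c Is Ih eps_psi z = 0})\<^sup>2"
    and pstar: "\<forall>x. f0 pstar + rho * psi_pen c Is Ih eps_psi pstar
                    \<le> f0 x + rho * psi_pen c Is Ih eps_psi x"
    and pa: "psi_pen c Is Ih eps_psi pa = 0"
    and D0pos: "Sup {norm (g0 x) | x. f0 x \<le> f0 pa} > 0"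
    and L0pos: "L0 > 0"
    and eps: "eps1 \<ge> 0" "eps2 \<ge> 0"
    and Zcond: "sqrt (2 * eps1 / mu0) \<le> Z1 (Sup {norm (g0 x) | x. f0 x \<le> f0 pa}) L0 eps2"
    and close: "\<bar>(f0 p + rho * psi_pen c Is Ih eps_psi p)
                  - (f0 pstar + rho * psi_pen c Is Ih eps_psi pstar)\<bar> \<le> eps1"
  shows "\<bar>f0 p - f0 pstar\<bar> \<le> eps2"
proof -
  let ?psi = "psi_pen c Is Ih eps_psi"
  define D0 where "D0 = Sup {norm (g0 x) | x. f0 x \<le> f0 pa}"
  have grad: "\<And>x. GDERIV f0 x :> g0 x" using f0_C1 unfolding C1_with_grad_def by blast
  note lower = strongly_convex_grad_lower_bound[OF grad A3(2)]
    and upper = in_F1L_upper_bound[OF grad A2(3)]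
  have "convex_on UNIV (\<lambda>x. rho * ?psi x)" using rho A3(3) by (simp add: convex_on_cmul)
  then have "mu0 / 2 * (norm (p - pstar))\<^sup>2 \<le> eps1"
    using quadratic_growth_at_minimizer[OF lower, of "\<lambda>x. rho * ?psi x" pstar p] pstar close
    by fastforce
  then have "(norm (p - pstar))\<^sup>2 \<le> 2 * eps1 / mu0" using A3(1) by (simp add: field_simps)
  then have "norm (p - pstar) \<le> Z1 D0 L0 eps2"
    using real_le_rsqrt Zcond unfolding D0_def by (meson order_trans)
  moreover have "f0 pstar \<le> f0 pa"
    using pstar[rule_format, of pa] pa
      mult_nonneg_nonneg[OF less_imp_le[OF rho] psi_pen_nonneg[of c Is Ih eps_psi pstar]]
    by simp
  then have "norm (g0 pstar) \<le> D0"
    unfolding D0_def using norm_grad_le_Sup_sublevel[OF upper L0pos] A1 by blast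
  ultimately show ?thesis
    using abs_diff_le_of_gradient_bounds[OF upper lower A2(1) less_imp_le[OF A3(1)], of pstar D0 p]
      quadratic_le_of_le_Z1[OF D0pos[folded D0_def] L0pos eps(2) norm_ge_zero, of "p - pstar"]
    by linarith
qed

end
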